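(* Fix an integer $n\ge1$. In the $q$-shuffle algebra $\mathbb V$ define the following sets, where $i,j\in\mathbb N$: $$N=\{\tilde G_i\star G_j: i+j=n\},\qquad S=\{G_i\star\tilde G_j: i+j=n\},$$ $$E=\{W_{i+1}\star W_{-j}: i+j=n-1\},\qquad W=\{W_{-i}\star W_{j+1}: i+j=n-1\}.$$ Then the sets $N\cup E$, $N\cup W$, $S\cup E$, $S\cup W$ all have the same linear span.
   Context: Let $\mathbb F$ be a field and let $q\in\mathbb F$ be nonzero and not a root of unity. Let $\mathbb V$ be the free associative $\mathbb F$-algebra on noncommuting $x,y$, with basis the words (including $1$). Juxtaposition denotes concatenation. Set $\langle x,x\rangle=\langle y,y\rangle=2$ and $\langle x,y\rangle=\langle y,x\rangle=-2$. The $q$-shuffle product $\star$ is the bilinear product determined as follows: - $1\star v=v\star 1=v$; - for nontrivial words $u=u_1\cdots u_r$ and $v=v_1\cdots v_s$, $$u\star v=u_1((u_2\cdots u_r)\star v)+v_1(u\star(v_2\cdots v_s))q^{\langle u_1,v_1\rangle+\cdots+\langle u_r,v_1\rangle}.$$ This makes $\mathbb V$ an associative algebra, the $q$-shuffle algebra. For $k\in\mathbb N$: - $W_{-k}=xyx\cdots x$ is the alternating word of length $2k+1$ beginning and ending with $x$; - $W_{k+1}=yxy\cdots y$ is the alternating word of length $2k+1$ beginning and ending with $y$; - $G_k=yxyx\cdots yx$ is the word of length $2k$; - $\tilde G_k=xyxy\cdots xy$ is the word of length $2k$; - $G_0=\tilde G_0=1$. *)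

theory Defs
  imports Complex_Main "HOL-Library.Function_Algebras"
begin

datatype letter = X | Y

type_synonym word = "letter list"

text \<open>Elements of V are represented as coefficient functions on words
  (all elements arising below are finitely supported).\<close>
type_synonym 'k vec = "word \<Rightarrow> 'k"

definition basis :: "word \<Rightarrow> 'k::field vec" where
  "basis u = (\<lambda>w. if w = u then 1 else 0)"

text \<open>Left concatenation by a letter, extended linearly: a(\<Sum> c_w w) = \<Sum> c_w (a w).\<close>
definition lpre :: "letter \<Rightarrow> 'k::field vec \<Rightarrow> 'k vec" where
  "lpre a f = (\<lambda>w. case w of [] \<Rightarrow> 0 | b # w' \<Rightarrow> (if b = a then f w' else 0))"

fun ip :: "letter \<Rightarrow> letter \<Rightarrow> int" where
  "ip a b = (if a = b then 2 else -2)"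

fun qsh :: "'k::field \<Rightarrow> word \<Rightarrow> word \<Rightarrow> 'k vec" where
  "qsh q [] v = basis v"
| "qsh q u [] = basis u"
| "qsh q (a # u) (b # v) =
     (\<lambda>w. lpre a (qsh q u (b # v)) w
        + q powi (sum_list (map (\<lambda>c. ip c b) (a # u))) * lpre b (qsh q (a # u) v) w)"

fun altw :: "letter \<Rightarrow> nat \<Rightarrow> word" where
  "altw a 0 = []"
| "altw a (Suc m) = a # altw (if a = X then Y else X) m"

definition Wm :: "nat \<Rightarrow> word" where "Wm k = altw X (2 * k + 1)"   \<comment> \<open>W_{-k}\<close>
definition Wp :: "nat \<Rightarrow> word" where "Wp k = altw Y (2 * k + 1)"   \<comment> \<open>W_{k+1}\<close>
definition G :: "nat \<Rightarrow> word" where "G k = altw Y (2 * k)"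
definition Gt :: "nat \<Rightarrow> word" where "Gt k = altw X (2 * k)"

definition vspan :: "'k::field vec set \<Rightarrow> 'k vec set" where
  "vspan A = module.span (\<lambda>c f w. c * f w) A"

end

theory Submission
  imports Defs
begin

text \<open>
  Both relations between the four families are commutator identities in V (writing * for the
  q-shuffle product and G~ for the tilde words):
    W_{-i} * W_{j+1} - W_{j+1} * W_{-i}
      = (1 - q^-2) sum_{k <= i} (G~_{i+j+1-k} * G_k - G~_k * G_{i+j+1-k}),
    G_i * G~_j - G~_j * G_i
      = (q^2 - 1) sum_{k < i} (W_{i+j-k} * W_{-k} - W_{k+1} * W_{-(i+j-1-k)}).
  They are proved coefficientwise.  The coefficient of xy w or yx w in a q-shuffle of two
  alternating words is a combination of coefficients of w in q-shuffles of shorter alternating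
  words, so the defects of the two identities satisfy a joint recursion in the length of the word
  and vanish together.  The first identity gives span (N \<union> E) = span (N \<union> W), the second puts S
  into span (N \<union> E), and the automorphism of V exchanging x and y swaps N with S and E with W,
  which yields the remaining inclusions.
\<close>

fun flip :: "letter \<Rightarrow> letter" where
  "flip X = Y"
| "flip Y = X"

lemma flip_flip [simp]: "flip (flip a) = a"
  by (cases a) auto

lemma ip_flip_flip [simp]: "ip (flip a) (flip b) = ip a b"
  by (cases a; cases b) auto

lemma flip_neq [simp]: "flip a \<noteq> a" "a \<noteq> flip a"
  by (cases a; simp)+

lemma altw_Suc_flip: "altw a (Suc m) = a # altw (flip a) m"
  by (cases a) auto

lemma length_altw [simp]: "length (altw a m) = m"
  by (induction m arbitrary: a) auto

lemma altw_flip: "altw (flip a) m = map flip (altw a m)"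
  by (induction m arbitrary: a) (simp_all add: altw_Suc_flip comp_def del: altw.simps(2))

lemma G_0: "G 0 = []" and Gt_0: "Gt 0 = []"
  by (simp_all add: G_def Gt_def)

lemma sum_ip_altw: "sum_list (map (\<lambda>c. ip c b) (altw a m)) = (if even m then 0 else ip a b)"
proof (induction m arbitrary: a)
  case 0
  then show ?case by simp
next
  case (Suc m)
  then show ?case by (cases a; cases b) (auto simp: altw_Suc_flip)
qed

section \<open>Coefficients of q-shuffles\<close>

lemma qsh_Nil_right [simp]: "qsh q u [] = basis u"
  by (cases u) auto

lemma qsh_apply_Nil: "qsh q u v [] = (if u = [] \<and> v = [] then 1 else 0)"
  by (cases u; cases v) (auto simp: basis_def lpre_def)

lemma qsh_apply_Cons: "qsh q u v (c # w) =
   (case u of [] \<Rightarrow> 0 | a # u' \<Rightarrow> if c = a then qsh q u' v w else 0)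
 + (case v of [] \<Rightarrow> 0 | b # v' \<Rightarrow>
      if c = b then q powi (sum_list (map (\<lambda>d. ip d b) u)) * qsh q u v' w else 0)"
  by (cases u; cases v) (auto simp: basis_def lpre_def)

lemma qsh_eq_0_if_length_ne: "length w \<noteq> length u + length v \<Longrightarrow> qsh q u v w = 0"
proof (induction w arbitrary: u v)
  case Nil
  then show ?case by (auto simp: qsh_apply_Nil)
next
  case (Cons c w)
  then show ?case
    unfolding qsh_apply_Cons by (auto split: list.splits simp: basis_def simp del: qsh.simps)
qed

lemma basis_map_flip: "basis (map flip u) w = basis u (map flip w)"
  by (auto simp: basis_def comp_def)

lemma qsh_map_flip: "qsh q (map flip u) (map flip v) w = qsh q u v (map flip w)"
proof (induction w arbitrary: u v)
  case Nil
  then show ?case by (simp add: qsh_apply_Nil)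
next
  case (Cons c w)
  have ip_flip: "(\<lambda>d. ip d (flip b)) \<circ> flip = (\<lambda>d. ip d b)" for b
    by (auto simp del: ip.simps)
  have eq_flip: "c = flip a \<longleftrightarrow> flip c = a" for a
    by (cases a; cases c) auto
  show ?case
    unfolding qsh_apply_Cons list.map
    by (cases u; cases v)
       (simp_all add: ip_flip eq_flip Cons.IH[symmetric] basis_map_flip del: qsh.simps ip.simps)
qed

section \<open>Reading two letters off a q-shuffle of alternating words\<close>

lemma qsh_altw_Cons: "qsh q (altw a m) (altw b l) (c # w) =
   (if 0 < m \<and> c = a then qsh q (altw (flip a) (m - 1)) (altw b l) w else 0)
 + (if 0 < l \<and> c = b
    then q powi (if even m then 0 else ip a b) * qsh q (altw a m) (altw (flip b) (l - 1)) w
    else 0)"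
proof (cases m)
  case 0
  then show ?thesis by (cases l) (auto simp: basis_def altw_Suc_flip simp del: altw.simps(2))
next
  case (Suc m')
  show ?thesis
  proof (cases l)
    case 0
    with Suc show ?thesis by (auto simp: basis_def altw_Suc_flip simp del: altw.simps(2))
  next
    case (Suc l')
    have ip_sum: "sum_list (map (\<lambda>d. ip d b) (a # altw (flip a) m')) = (if even m then 0 else ip a b)"
      using sum_ip_altw[of b a m] \<open>m = Suc m'\<close> by (simp only: altw_Suc_flip)
    show ?thesis
      using \<open>m = Suc m'\<close> Suc
      by (simp only: altw_Suc_flip qsh_apply_Cons list.case ip_sum) (simp del: qsh.simps ip.simps)
  qed
qed

lemma qsh_altw_Cons_Cons_left:
  "qsh q (altw a m) (altw (flip a) l) (a # flip a # w) =
     (if 2 \<le> m then qsh q (altw a (m - 2)) (altw (flip a) l) w else 0)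
   + (if 1 \<le> m \<and> 1 \<le> l
      then q powi (if even m then 2 else 0) * qsh q (altw (flip a) (m - 1)) (altw a (l - 1)) w
      else 0)"
  by (cases m) (auto simp: qsh_altw_Cons diff_diff_left simp del: altw.simps)

lemma qsh_altw_Cons_Cons_right:
  assumes "q \<noteq> 0"
  shows "qsh q (altw a m) (altw (flip a) l) (flip a # a # w) =
     (if 1 \<le> m \<and> 1 \<le> l
      then q powi (if even m then 0 else -2) * qsh q (altw (flip a) (m - 1)) (altw a (l - 1)) w
      else 0)
   + (if 2 \<le> l then qsh q (altw a m) (altw (flip a) (l - 2)) w else 0)"
  using assms
  by (auto simp: qsh_altw_Cons diff_diff_left numeral_2_eq_2 power_int_minus field_simps
      simp del: altw.simps(2))

lemma qsh_altw_repeated_letter: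
  assumes "a \<noteq> b"
  shows "qsh q (altw a m) (altw b l) (c # c # w) = 0"
proof -
  have "b = flip a" using assms by (cases a; cases b) auto
  then show ?thesis by (auto simp: qsh_altw_Cons simp del: altw.simps)
qed

lemma qsh_Gt_G_XY: "qsh q (Gt p) (G k) (X # Y # w) = (if p = 0 then 0
    else qsh q (Gt (p - 1)) (G k) w + (if k = 0 then 0 else q^2 * qsh q (Wp (p - 1)) (Wm (k - 1)) w))"
  using qsh_altw_Cons_Cons_left[of q X "2*p" "2*k" w]
  unfolding Gt_def G_def Wm_def Wp_def by (cases p; cases k) (simp_all del: altw.simps)

lemma qsh_Gt_G_YX:
  assumes "q \<noteq> 0"
  shows "qsh q (Gt p) (G k) (Y # X # w) = (if k = 0 then 0
    else qsh q (Gt p) (G (k - 1)) w + (if p = 0 then 0 else qsh q (Wp (p - 1)) (Wm (k - 1)) w))"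
  using qsh_altw_Cons_Cons_right[OF assms, of X "2*p" "2*k" w]
  unfolding Gt_def G_def Wm_def Wp_def by (cases p; cases k) (simp_all del: altw.simps)

lemma qsh_Wm_Wp_XY: "qsh q (Wm p) (Wp k) (X # Y # w) =
    (if p = 0 then 0 else qsh q (Wm (p - 1)) (Wp k) w) + qsh q (G p) (Gt k) w"
  using qsh_altw_Cons_Cons_left[of q X "2*p+1" "2*k+1" w]
  unfolding Gt_def G_def Wm_def Wp_def by (cases p; cases k) (simp_all del: altw.simps)

lemma qsh_Wm_Wp_YX:
  assumes "q \<noteq> 0"
  shows "qsh q (Wm p) (Wp k) (Y # X # w) =
    q powi -2 * qsh q (G p) (Gt k) w + (if k = 0 then 0 else qsh q (Wm p) (Wp (k - 1)) w)"
  using qsh_altw_Cons_Cons_right[OF assms, of X "2*p+1" "2*k+1" w]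
  unfolding Gt_def G_def Wm_def Wp_def by (cases p; cases k) (simp_all del: altw.simps)

lemma qsh_G_Gt_XY:
  assumes "q \<noteq> 0"
  shows "qsh q (G p) (Gt k) (X # Y # w) = (if k = 0 then 0
    else qsh q (G p) (Gt (k - 1)) w + (if p = 0 then 0 else qsh q (Wm (p - 1)) (Wp (k - 1)) w))"
  using qsh_altw_Cons_Cons_right[OF assms, of Y "2*p" "2*k" w]
  unfolding Gt_def G_def Wm_def Wp_def by (cases p; cases k) (simp_all del: altw.simps)

lemma qsh_G_Gt_YX: "qsh q (G p) (Gt k) (Y # X # w) = (if p = 0 then 0
    else qsh q (G (p - 1)) (Gt k) w + (if k = 0 then 0 else q^2 * qsh q (Wm (p - 1)) (Wp (k - 1)) w))"
  using qsh_altw_Cons_Cons_left[of q Y "2*p" "2*k" w]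
  unfolding Gt_def G_def Wm_def Wp_def by (cases p; cases k) (simp_all del: altw.simps)

lemma qsh_Wp_Wm_XY:
  assumes "q \<noteq> 0"
  shows "qsh q (Wp p) (Wm k) (X # Y # w) =
    q powi -2 * qsh q (Gt p) (G k) w + (if k = 0 then 0 else qsh q (Wp p) (Wm (k - 1)) w)"
  using qsh_altw_Cons_Cons_right[OF assms, of Y "2*p+1" "2*k+1" w]
  unfolding Gt_def G_def Wm_def Wp_def by (cases p; cases k) (simp_all del: altw.simps)

lemma qsh_Wp_Wm_YX: "qsh q (Wp p) (Wm k) (Y # X # w) =
    (if p = 0 then 0 else qsh q (Wp (p - 1)) (Wm k) w) + qsh q (Gt p) (G k) w"
  using qsh_altw_Cons_Cons_left[of q Y "2*p+1" "2*k+1" w]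
  unfolding Gt_def G_def Wm_def Wp_def by (cases p; cases k) (simp_all del: altw.simps)

section \<open>The two commutator identities\<close>

definition Gt_G_skew_sum :: "'k::field \<Rightarrow> nat \<Rightarrow> nat \<Rightarrow> 'k vec" where
  "Gt_G_skew_sum q m i w = (\<Sum>k\<le>i. qsh q (Gt (m - k)) (G k) w - qsh q (Gt k) (G (m - k)) w)"

definition Wp_Wm_skew_sum :: "'k::field \<Rightarrow> nat \<Rightarrow> nat \<Rightarrow> 'k vec" where
  "Wp_Wm_skew_sum q m i w = (\<Sum>k<i. qsh q (Wp (m - k)) (Wm k) w - qsh q (Wp k) (Wm (m - k)) w)"

lemma Gt_G_skew_sum_diag: "Gt_G_skew_sum q i i w = 0"
proof -
  have "(\<Sum>k\<le>i. qsh q (Gt (i - k)) (G k) w) = (\<Sum>k\<le>i. qsh q (Gt k) (G (i - k)) w)"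
    by (rule sum.reindex_bij_witness[where i="\<lambda>k. i - k" and j="\<lambda>k. i - k"]) auto
  then show ?thesis
    by (simp add: Gt_G_skew_sum_def sum_subtractf)
qed

lemma Wp_Wm_skew_sum_diag: "Wp_Wm_skew_sum q (i - 1) i w = 0"
proof -
  have "(\<Sum>k<i. qsh q (Wp (i - 1 - k)) (Wm k) w) = (\<Sum>k<i. qsh q (Wp k) (Wm (i - 1 - k)) w)"
    by (rule sum.reindex_bij_witness[where i="\<lambda>k. i - 1 - k" and j="\<lambda>k. i - 1 - k"]) auto
  then show ?thesis
    by (simp add: Wp_Wm_skew_sum_def sum_subtractf)
qed

lemma Gt_G_skew_sum_XY:
  "Gt_G_skew_sum q (i + j + 2) (Suc i) (X # Y # w) = Gt_G_skew_sum q (i + j + 1) i w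
     + qsh q (Gt j) (G (Suc i)) w + q^2 * Wp_Wm_skew_sum q (i + j) (Suc i) w"
proof -
  define GG where "GG p k = qsh q (Gt p) (G k) w" for p k
  define WW where "WW p k = qsh q (Wp p) (Wm k) w" for p k
  define g where "g k = (if k = 0 then GG (i+j+1) 0
    else GG (i+j+1-k) k + q^2 * WW (i+j+1-k) (k-1)
       - GG (k-1) (i+j+2-k) - q^2 * WW (k-1) (i+j+1-k))" for k
  have "Gt_G_skew_sum q (i + j + 2) (Suc i) (X # Y # w) = (\<Sum>k\<le>Suc i. g k)"
    unfolding Gt_G_skew_sum_def
    by (intro sum.cong refl) (auto simp: g_def GG_def WW_def qsh_Gt_G_XY Suc_diff_le)
  also have "\<dots> = GG (i+j+1) 0
      + (\<Sum>k\<le>i. GG (i+j-k) (Suc k) + q^2 * WW (i+j-k) k - GG k (i+j+1-k) - q^2 * WW k (i+j-k))"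
    by (subst sum.atMost_Suc_shift) (auto simp: g_def Suc_diff_le intro!: sum.cong)
  also have "\<dots> = (\<Sum>k\<le>Suc i. GG (i+j+1-k) k) - (\<Sum>k\<le>i. GG k (i+j+1-k))
      + q^2 * (\<Sum>k<Suc i. WW (i+j-k) k - WW k (i+j-k))"
  proof -
    have "(\<Sum>k\<le>Suc i. GG (i+j+1-k) k) = GG (i+j+1) 0 + (\<Sum>k\<le>i. GG (i+j-k) (Suc k))"
      by (subst sum.atMost_Suc_shift) simp
    then show ?thesis
      by (simp add: lessThan_Suc_atMost sum.distrib sum_subtractf sum_distrib_left algebra_simps)
  qed
  also have "\<dots> = Gt_G_skew_sum q (i + j + 1) i w + GG j (Suc i)
      + q^2 * Wp_Wm_skew_sum q (i + j) (Suc i) w"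
    by (simp add: Gt_G_skew_sum_def Wp_Wm_skew_sum_def GG_def WW_def sum_subtractf)
  finally show ?thesis by (simp add: GG_def)
qed

lemma Gt_G_skew_sum_YX:
  assumes "q \<noteq> 0" and "i \<le> m"
  shows "Gt_G_skew_sum q (Suc m) i (Y # X # w) = Gt_G_skew_sum q m i w
     - qsh q (Gt (m - i)) (G i) w + Wp_Wm_skew_sum q (m - 1) i w"
proof -
  define GG where "GG p k = qsh q (Gt p) (G k) w" for p k
  define WW where "WW p k = qsh q (Wp p) (Wm k) w" for p k
  define g where "g k = (if k = 0 then - GG 0 m
    else GG (m+1-k) (k-1) + WW (m-k) (k-1) - WW (k-1) (m-k) - GG k (m-k))" for k
  have "Gt_G_skew_sum q (Suc m) i (Y # X # w) = (\<Sum>k\<le>i. g k)"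
    unfolding Gt_G_skew_sum_def using \<open>i \<le> m\<close>
    by (intro sum.cong refl) (auto simp: g_def GG_def WW_def qsh_Gt_G_YX[OF \<open>q \<noteq> 0\<close>] Suc_diff_le)
  also have "\<dots> = - GG 0 m + (\<Sum>k<i. GG (m-k) k + WW (m-1-k) k - WW k (m-1-k) - GG (Suc k) (m-1-k))"
    by (subst sum.atMost_shift) (auto simp: g_def intro!: sum.cong)
  also have "\<dots> = (\<Sum>k\<le>i. GG (m-k) k) - (\<Sum>k\<le>i. GG k (m-k)) - GG (m-i) i
      + (\<Sum>k<i. WW (m-1-k) k - WW k (m-1-k))"
  proof -
    have "(\<Sum>k\<le>i. GG k (m-k)) = GG 0 m + (\<Sum>k<i. GG (Suc k) (m-1-k))"
      by (subst sum.atMost_shift) simp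
    then show ?thesis
      by (simp add: lessThan_Suc_atMost[symmetric] sum.distrib sum_subtractf algebra_simps)
  qed
  also have "\<dots> = Gt_G_skew_sum q m i w - GG (m-i) i + Wp_Wm_skew_sum q (m - 1) i w"
    by (simp add: Gt_G_skew_sum_def Wp_Wm_skew_sum_def GG_def WW_def sum_subtractf)
  finally show ?thesis by (simp add: GG_def)
qed

lemma Wp_Wm_skew_sum_XY:
  assumes "q \<noteq> 0"
  shows "Wp_Wm_skew_sum q (i + j + 1) (Suc i) (X # Y # w) = q powi -2 * Gt_G_skew_sum q (i + j + 1) i w
     + Wp_Wm_skew_sum q (i + j) (Suc i) w - qsh q (Wp j) (Wm i) w"
proof -
  define GG where "GG p k = qsh q (Gt p) (G k) w" for p k
  define WW where "WW p k = qsh q (Wp p) (Wm k) w" for p k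
  have "Wp_Wm_skew_sum q (i + j + 1) (Suc i) (X # Y # w)
      = (\<Sum>k\<le>i. q powi -2 * GG (i+j+1-k) k + (if k = 0 then 0 else WW (i+j+1-k) (k-1))
                  - q powi -2 * GG k (i+j+1-k) - WW k (i+j-k))"
    unfolding Wp_Wm_skew_sum_def lessThan_Suc_atMost
    by (intro sum.cong refl) (auto simp: GG_def WW_def qsh_Wp_Wm_XY[OF assms] Suc_diff_le)
  also have "\<dots> = q powi -2 * (\<Sum>k\<le>i. GG (i+j+1-k) k - GG k (i+j+1-k))
      + (\<Sum>k<Suc i. WW (i+j-k) k - WW k (i+j-k)) - WW j i"
  proof -
    have "(\<Sum>k\<le>i. if k = 0 then 0 else WW (i+j+1-k) (k-1)) = (\<Sum>k<i. WW (i+j-k) k)"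
      by (subst sum.atMost_shift) simp
    then show ?thesis
      by (simp add: lessThan_Suc_atMost[symmetric] sum.distrib sum_subtractf sum_distrib_left
          algebra_simps)
  qed
  finally show ?thesis
    by (simp add: Gt_G_skew_sum_def Wp_Wm_skew_sum_def GG_def WW_def sum_subtractf)
qed

lemma Wp_Wm_skew_sum_YX:
  "Wp_Wm_skew_sum q (i + j + 1) (Suc i) (Y # X # w) = Gt_G_skew_sum q (i + j + 1) i w
     + Wp_Wm_skew_sum q (i + j) i w + qsh q (Wp j) (Wm i) w"
proof -
  define GG where "GG p k = qsh q (Gt p) (G k) w" for p k
  define WW where "WW p k = qsh q (Wp p) (Wm k) w" for p k
  have "Wp_Wm_skew_sum q (i + j + 1) (Suc i) (Y # X # w)
      = (\<Sum>k\<le>i. WW (i+j-k) k + GG (i+j+1-k) k - (if k = 0 then 0 else WW (k-1) (i+j+1-k))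
                  - GG k (i+j+1-k))"
    unfolding Wp_Wm_skew_sum_def lessThan_Suc_atMost
    by (intro sum.cong refl) (auto simp: GG_def WW_def qsh_Wp_Wm_YX Suc_diff_le)
  also have "\<dots> = (\<Sum>k\<le>i. GG (i+j+1-k) k - GG k (i+j+1-k))
      + (\<Sum>k<i. WW (i+j-k) k - WW k (i+j-k)) + WW j i"
  proof -
    have "(\<Sum>k\<le>i. if k = 0 then 0 else WW (k-1) (i+j+1-k)) = (\<Sum>k<i. WW k (i+j-k))"
      by (subst sum.atMost_shift) simp
    then show ?thesis
      by (simp add: lessThan_Suc_atMost[symmetric] sum.distrib sum_subtractf algebra_simps)
  qed
  finally show ?thesis
    by (simp add: Gt_G_skew_sum_def Wp_Wm_skew_sum_def GG_def WW_def sum_subtractf)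
qed

definition W_comm_defect :: "'k::field \<Rightarrow> nat \<Rightarrow> nat \<Rightarrow> 'k vec" where
  "W_comm_defect q i j w = qsh q (Wm i) (Wp j) w - qsh q (Wp j) (Wm i) w
     - (1 - q powi -2) * Gt_G_skew_sum q (i + j + 1) i w"

definition G_comm_defect :: "'k::field \<Rightarrow> nat \<Rightarrow> nat \<Rightarrow> 'k vec" where
  "G_comm_defect q i j w = qsh q (G i) (Gt j) w - qsh q (Gt j) (G i) w
     - (q^2 - 1) * Wp_Wm_skew_sum q (i + j - 1) i w"

lemma W_comm_defect_XY:
  assumes "q \<noteq> 0"
  shows "W_comm_defect q i j (X # Y # w) =
    (if i = 0 then 0 else W_comm_defect q (i - 1) j w + G_comm_defect q i j w)"
proof (cases i)
  case 0
  then show ?thesis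
    using assms
    by (simp add: W_comm_defect_def Gt_G_skew_sum_def qsh_Wm_Wp_XY qsh_Wp_Wm_XY qsh_Gt_G_XY,
        simp add: G_0 Gt_0 power_int_minus field_simps)
next
  case (Suc i')
  then show ?thesis
    using assms Gt_G_skew_sum_XY[of q i' j w]
    by (simp add: W_comm_defect_def G_comm_defect_def qsh_Wm_Wp_XY qsh_Wp_Wm_XY
        power_int_minus field_simps)
qed

lemma W_comm_defect_YX:
  assumes "q \<noteq> 0"
  shows "W_comm_defect q i j (Y # X # w) =
    (if j = 0 then 0 else W_comm_defect q i (j - 1) w + q powi -2 * G_comm_defect q i j w)"
proof (cases j)
  case 0
  then show ?thesis
    using assms Gt_G_skew_sum_YX[OF assms order.refl, of i w] Wp_Wm_skew_sum_diag[of q i w]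
    by (simp add: W_comm_defect_def qsh_Wm_Wp_YX qsh_Wp_Wm_YX Gt_G_skew_sum_diag,
        simp add: G_0 Gt_0 power_int_minus field_simps)
next
  case (Suc j')
  have skew: "Gt_G_skew_sum q (i + j + 1) i (Y # X # w) = Gt_G_skew_sum q (i + j' + 1) i w
      - qsh q (Gt j) (G i) w + Wp_Wm_skew_sum q (i + j') i w"
    using Gt_G_skew_sum_YX[OF assms, of i "i + j' + 1" w] Suc by simp
  show ?thesis
    unfolding W_comm_defect_def G_comm_defect_def skew
    using Suc assms by (simp add: qsh_Wm_Wp_YX qsh_Wp_Wm_YX power_int_minus field_simps)
qed

lemma G_comm_defect_0_left: "G_comm_defect q 0 j w = 0"
  by (simp add: G_comm_defect_def Wp_Wm_skew_sum_def G_0)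

lemma G_comm_defect_0_right: "G_comm_defect q i 0 w = 0"
  using Wp_Wm_skew_sum_diag[of q i w] by (simp add: G_comm_defect_def Gt_0)

lemma G_comm_defect_XY:
  assumes "q \<noteq> 0"
  shows "G_comm_defect q i j (X # Y # w) =
    (if i = 0 \<or> j = 0 then 0 else W_comm_defect q (i - 1) (j - 1) w + G_comm_defect q i (j - 1) w)"
proof (cases "i = 0 \<or> j = 0")
  case True
  then show ?thesis using G_comm_defect_0_left G_comm_defect_0_right by auto
next
  case False
  then obtain i' j' where ij: "i = Suc i'" "j = Suc j'" by (cases i; cases j) auto
  have skew: "Wp_Wm_skew_sum q (i + j - 1) i (X # Y # w)
      = q powi -2 * Gt_G_skew_sum q (i' + j' + 1) i' w
      + Wp_Wm_skew_sum q (i' + j') i w - qsh q (Wp j') (Wm i') w"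
    using Wp_Wm_skew_sum_XY[OF assms, of i' j' w] ij by simp
  show ?thesis
    unfolding G_comm_defect_def skew
    using ij assms by (simp add: W_comm_defect_def qsh_G_Gt_XY qsh_Gt_G_XY power_int_minus field_simps)
qed

lemma G_comm_defect_YX:
  assumes "q \<noteq> 0"
  shows "G_comm_defect q i j (Y # X # w) =
    (if i = 0 \<or> j = 0 then 0
     else q^2 * W_comm_defect q (i - 1) (j - 1) w + G_comm_defect q (i - 1) j w)"
proof (cases "i = 0 \<or> j = 0")
  case True
  then show ?thesis using G_comm_defect_0_left G_comm_defect_0_right by auto
next
  case False
  then obtain i' j' where ij: "i = Suc i'" "j = Suc j'" by (cases i; cases j) auto
  have skew: "Wp_Wm_skew_sum q (i + j - 1) i (Y # X # w) = Gt_G_skew_sum q (i' + j' + 1) i' w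
      + Wp_Wm_skew_sum q (i' + j') i' w + qsh q (Wp j') (Wm i') w"
    using Wp_Wm_skew_sum_YX[of q i' j' w] ij by simp
  show ?thesis
    unfolding G_comm_defect_def skew
    using ij assms by (simp add: W_comm_defect_def qsh_G_Gt_YX qsh_Gt_G_YX power_int_minus field_simps)
qed

lemma W_comm_defect_repeated_letter: "W_comm_defect q i j (c # c # w) = 0"
  by (simp add: W_comm_defect_def Gt_G_skew_sum_def Wm_def Wp_def Gt_def G_def
      qsh_altw_repeated_letter del: altw.simps)

lemma G_comm_defect_repeated_letter: "G_comm_defect q i j (c # c # w) = 0"
  by (simp add: G_comm_defect_def Wp_Wm_skew_sum_def Wm_def Wp_def Gt_def G_def
      qsh_altw_repeated_letter del: altw.simps)

lemma W_comm_defect_short: "length w < 2 \<Longrightarrow> W_comm_defect q i j w = 0"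
  by (simp add: W_comm_defect_def Gt_G_skew_sum_def Wm_def Wp_def Gt_def G_def
      qsh_eq_0_if_length_ne del: altw.simps)

lemma G_comm_defect_short:
  assumes "length w < 2"
  shows "G_comm_defect q i j w = 0"
proof (cases "i = 0 \<or> j = 0")
  case True
  then show ?thesis using G_comm_defect_0_left G_comm_defect_0_right by auto
next
  case False
  with assms show ?thesis
    by (simp add: G_comm_defect_def Wp_Wm_skew_sum_def Wm_def Wp_def Gt_def G_def
        qsh_eq_0_if_length_ne del: altw.simps)
qed

lemma comm_defects_vanish:
  assumes "q \<noteq> 0"
  shows "W_comm_defect q i j w = 0 \<and> G_comm_defect q i j w = 0"
proof (induction w arbitrary: i j rule: induct_list012)
  case (3 c d w)
  then show ?case
    by (cases c; cases d) (simp_all add: W_comm_defect_XY W_comm_defect_YX G_comm_defect_XY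
        G_comm_defect_YX W_comm_defect_repeated_letter G_comm_defect_repeated_letter assms)
qed (simp_all add: W_comm_defect_short G_comm_defect_short)

lemma qsh_Wm_Wp_commutator:
  assumes "q \<noteq> 0"
  shows "qsh q (Wm i) (Wp j) w - qsh q (Wp j) (Wm i) w
    = (1 - q powi -2) * Gt_G_skew_sum q (i + j + 1) i w"
  using comm_defects_vanish[OF assms, of i j w] by (simp add: W_comm_defect_def)

lemma qsh_G_Gt_commutator:
  assumes "q \<noteq> 0"
  shows "qsh q (G i) (Gt j) w - qsh q (Gt j) (G i) w
    = (q^2 - 1) * Wp_Wm_skew_sum q (i + j - 1) i w"
  using comm_defects_vanish[OF assms, of i j w] by (simp add: G_comm_defect_def)

section \<open>Spans\<close>

global_interpretation vec: module "\<lambda>(c::'k::field) (f::'k vec) w. c * f w"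
  by unfold_locales (auto simp: algebra_simps)

lemma vspan_eq_span: "vspan A = vec.span A"
  by (simp add: vspan_def)

lemma sum_fun_apply: "(\<Sum>k\<in>K. f k) w = (\<Sum>k\<in>K. f k w)"
  by (induction K rule: infinite_finite_induct) auto

lemma sum_diff_in_vspan:
  assumes "finite K" and "\<And>k. k \<in> K \<Longrightarrow> f k \<in> A \<and> g k \<in> A"
  shows "(\<lambda>w. \<Sum>k\<in>K. f k w - g k w) \<in> vspan A"
proof -
  have "(\<lambda>w. \<Sum>k\<in>K. f k w - g k w) = (\<Sum>k\<in>K. f k - g k)"
    by (simp add: fun_eq_iff sum_fun_apply)
  also have "\<dots> \<in> vspan A"
    unfolding vspan_eq_span using assms(2)
    by (intro vec.span_sum vec.span_diff) (auto intro: vec.span_base)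
  finally show ?thesis .
qed

lemma vspan_Un_eq_if_diffs_in_vspan:
  assumes "\<And>b. b \<in> B \<Longrightarrow> \<exists>c\<in>C. b - c \<in> vspan A"
    and "\<And>c. c \<in> C \<Longrightarrow> \<exists>b\<in>B. b - c \<in> vspan A"
  shows "vspan (A \<union> B) = vspan (A \<union> C)"
proof -
  have span_Un: "A \<union> D \<subseteq> vspan (A \<union> D)" "vspan A \<subseteq> vspan (A \<union> D)" for D
    unfolding vspan_eq_span by (auto intro: vec.span_base vec.span_mono[THEN subsetD])
  have "B \<subseteq> vspan (A \<union> C)"
  proof
    fix b assume "b \<in> B"
    then obtain c where "c \<in> C" "b - c \<in> vspan A" using assms(1) by blast
    then have "(b - c) + c \<in> vspan (A \<union> C)"
      using span_Un unfolding vspan_eq_span by (blast intro: vec.span_add)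
    then show "b \<in> vspan (A \<union> C)" by simp
  qed
  moreover have "C \<subseteq> vspan (A \<union> B)"
  proof
    fix c assume "c \<in> C"
    then obtain b where "b \<in> B" "b - c \<in> vspan A" using assms(2) by blast
    then have "b - (b - c) \<in> vspan (A \<union> B)"
      using span_Un unfolding vspan_eq_span by (blast intro: vec.span_diff)
    then show "c \<in> vspan (A \<union> B)" by simp
  qed
  ultimately show ?thesis
    using span_Un unfolding vspan_eq_span vec.span_eq by blast
qed

definition north :: "'k::field \<Rightarrow> nat \<Rightarrow> 'k vec set" where
  "north q n = {qsh q (Gt i) (G j) | i j. i + j = n}"

definition south :: "'k::field \<Rightarrow> nat \<Rightarrow> 'k vec set" where
  "south q n = {qsh q (G i) (Gt j) | i j. i + j = n}"

definition east :: "'k::field \<Rightarrow> nat \<Rightarrow> 'k vec set" where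
  "east q n = {qsh q (Wp i) (Wm j) | i j. i + j = n - 1}"

definition west :: "'k::field \<Rightarrow> nat \<Rightarrow> 'k vec set" where
  "west q n = {qsh q (Wm i) (Wp j) | i j. i + j = n - 1}"

lemma qsh_Gt_G_in_north: "i + j = n \<Longrightarrow> qsh q (Gt i) (G j) \<in> north q n"
  unfolding north_def by blast

lemma qsh_Wp_Wm_in_east: "i + j + 1 = n \<Longrightarrow> qsh q (Wp i) (Wm j) \<in> east q n"
  unfolding east_def by force

lemma qsh_Wm_Wp_in_west: "i + j + 1 = n \<Longrightarrow> qsh q (Wm i) (Wp j) \<in> west q n"
  unfolding west_def by force

lemma Gt_G_skew_sum_in_vspan:
  assumes "i \<le> m"
  shows "Gt_G_skew_sum q m i \<in> vspan (north q m)"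
proof -
  have "Gt_G_skew_sum q m i = (\<lambda>w. \<Sum>k\<le>i. qsh q (Gt (m - k)) (G k) w - qsh q (Gt k) (G (m - k)) w)"
    by (simp add: fun_eq_iff Gt_G_skew_sum_def)
  also have "\<dots> \<in> vspan (north q m)"
    using assms by (intro sum_diff_in_vspan) (fastforce simp: north_def)+
  finally show ?thesis .
qed

lemma Wp_Wm_skew_sum_in_vspan:
  assumes "i \<le> Suc m"
  shows "Wp_Wm_skew_sum q m i \<in> vspan (east q (Suc m))"
proof -
  have "Wp_Wm_skew_sum q m i = (\<lambda>w. \<Sum>k<i. qsh q (Wp (m - k)) (Wm k) w - qsh q (Wp k) (Wm (m - k)) w)"
    by (simp add: fun_eq_iff Wp_Wm_skew_sum_def)
  also have "\<dots> \<in> vspan (east q (Suc m))"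
    using assms by (intro sum_diff_in_vspan) (fastforce simp: east_def)+
  finally show ?thesis .
qed

lemma qsh_Wm_Wp_commutator_in_vspan:
  assumes "q \<noteq> 0"
  shows "qsh q (Wm i) (Wp j) - qsh q (Wp j) (Wm i) \<in> vspan (north q (i + j + 1))"
proof -
  have "qsh q (Wm i) (Wp j) - qsh q (Wp j) (Wm i) = (\<lambda>w. (1 - q powi -2) * Gt_G_skew_sum q (i + j + 1) i w)"
    by (simp add: fun_eq_iff qsh_Wm_Wp_commutator[OF assms])
  also have "\<dots> \<in> vspan (north q (i + j + 1))"
    using Gt_G_skew_sum_in_vspan[of i "i + j + 1" q] unfolding vspan_eq_span
    by (intro vec.span_scale) simp
  finally show ?thesis .
qed

lemma qsh_G_Gt_commutator_in_vspan:
  assumes "q \<noteq> 0"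
  shows "qsh q (G i) (Gt j) - qsh q (Gt j) (G i) \<in> vspan (east q (i + j))"
proof (cases i)
  case 0
  then show ?thesis by (simp add: G_0 vspan_eq_span vec.span_zero)
next
  case (Suc i')
  have "qsh q (G i) (Gt j) - qsh q (Gt j) (G i) = (\<lambda>w. (q^2 - 1) * Wp_Wm_skew_sum q (i + j - 1) i w)"
    by (simp add: fun_eq_iff qsh_G_Gt_commutator[OF assms])
  also have "\<dots> \<in> vspan (east q (i + j))"
    using Wp_Wm_skew_sum_in_vspan[of i "i + j - 1" q] Suc unfolding vspan_eq_span
    by (intro vec.span_scale) simp
  finally show ?thesis .
qed

lemma vspan_north_west_eq_north_east:
  assumes "q \<noteq> 0" and "0 < n"
  shows "vspan (north q n \<union> west q n) = vspan (north q n \<union> east q n)"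
proof (rule vspan_Un_eq_if_diffs_in_vspan)
  fix b assume "b \<in> west q n"
  then obtain i j where "b = qsh q (Wm i) (Wp j)" "i + j + 1 = n"
    using assms(2) by (auto simp: west_def)
  moreover have "qsh q (Wp j) (Wm i) \<in> east q n"
    using \<open>i + j + 1 = n\<close> by (intro qsh_Wp_Wm_in_east) simp
  ultimately show "\<exists>c\<in>east q n. b - c \<in> vspan (north q n)"
    using qsh_Wm_Wp_commutator_in_vspan[OF assms(1), of i j] by auto
next
  fix c assume "c \<in> east q n"
  then obtain i j where "c = qsh q (Wp j) (Wm i)" "i + j + 1 = n"
    using assms(2) by (auto simp: east_def)
  moreover have "qsh q (Wm i) (Wp j) \<in> west q n"
    using \<open>i + j + 1 = n\<close> by (rule qsh_Wm_Wp_in_west)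
  ultimately show "\<exists>b\<in>west q n. b - c \<in> vspan (north q n)"
    using qsh_Wm_Wp_commutator_in_vspan[OF assms(1), of i j] by auto
qed

lemma south_subset_vspan_north_east:
  assumes "q \<noteq> 0" and "0 < n"
  shows "south q n \<subseteq> vspan (north q n \<union> east q n)"
proof
  fix x assume "x \<in> south q n"
  then obtain i j where x: "x = qsh q (G i) (Gt j)" and "i + j = n"
    by (auto simp: south_def)
  then have "qsh q (Gt j) (G i) \<in> north q n" by (intro qsh_Gt_G_in_north) simp
  moreover have "x - qsh q (Gt j) (G i) \<in> vspan (east q n)"
    using qsh_G_Gt_commutator_in_vspan[OF assms(1), of i j] x \<open>i + j = n\<close> by simp
  ultimately have "(x - qsh q (Gt j) (G i)) + qsh q (Gt j) (G i) \<in> vspan (north q n \<union> east q n)"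
    unfolding vspan_eq_span
    by (blast intro: vec.span_add vec.span_base vec.span_mono[THEN subsetD])
  then show "x \<in> vspan (north q n \<union> east q n)" by simp
qed

definition swap_xy :: "'a vec \<Rightarrow> 'a vec" where
  "swap_xy f = (\<lambda>w. f (map flip w))"

lemma vspan_image_swap_xy: "vspan (swap_xy ` A) = swap_xy ` vspan A"
proof -
  have "module_hom (\<lambda>(c::'k::field) (f::'k vec) w. c * f w) (\<lambda>c f w. c * f w) swap_xy"
    unfolding module_hom_def module_hom_axioms_def
    using vec.module_axioms by (simp add: swap_xy_def fun_eq_iff)
  then show ?thesis
    unfolding vspan_eq_span by (rule module_hom.span_image)
qed

lemma swap_xy_qsh: "swap_xy (qsh q u v) = qsh q (map flip u) (map flip v)"
  by (simp add: swap_xy_def fun_eq_iff qsh_map_flip)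

lemma map_flip_alternating_words:
  "map flip (Wm i) = Wp i" "map flip (Wp i) = Wm i" "map flip (G i) = Gt i" "map flip (Gt i) = G i"
  by (simp_all add: Wm_def Wp_def G_def Gt_def altw_flip[symmetric])

lemma swap_xy_image_qsh:
  "swap_xy ` {qsh q (f i) (g j) | i j. P i j} = {qsh q (map flip (f i)) (map flip (g j)) | i j. P i j}"
proof -
  have "{qsh q (f i) (g j) | i j. P i j} = (\<lambda>(i, j). qsh q (f i) (g j)) ` {(i, j). P i j}"
    and "{qsh q (map flip (f i)) (map flip (g j)) | i j. P i j}
      = (\<lambda>(i, j). qsh q (map flip (f i)) (map flip (g j))) ` {(i, j). P i j}"
    by auto
  then show ?thesis
    by (simp add: image_image case_prod_beta swap_xy_qsh)
qed

lemma swap_xy_image_regions: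
  "swap_xy ` north q n = south q n" "swap_xy ` south q n = north q n"
  "swap_xy ` east q n = west q n" "swap_xy ` west q n = east q n"
  by (simp_all add: north_def south_def east_def west_def swap_xy_image_qsh map_flip_alternating_words)

lemma vspan_south_east_eq_south_west:
  assumes "q \<noteq> 0" and "0 < n"
  shows "vspan (south q n \<union> east q n) = vspan (south q n \<union> west q n)"
  using arg_cong[OF vspan_north_west_eq_north_east[OF assms], of "image swap_xy"]
  by (simp add: vspan_image_swap_xy[symmetric] image_Un swap_xy_image_regions)

lemma north_subset_vspan_south_west:
  assumes "q \<noteq> 0" and "0 < n"
  shows "north q n \<subseteq> vspan (south q n \<union> west q n)"
  using image_mono[OF south_subset_vspan_north_east[OF assms], of swap_xy]
  by (simp add: vspan_image_swap_xy[symmetric] image_Un swap_xy_image_regions)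

lemma vspan_north_east_eq_south_east:
  assumes "q \<noteq> 0" and "0 < n"
  shows "vspan (north q n \<union> east q n) = vspan (south q n \<union> east q n)"
proof -
  have "north q n \<subseteq> vspan (south q n \<union> east q n)"
    using north_subset_vspan_south_west[OF assms] vspan_south_east_eq_south_west[OF assms] by simp
  moreover have "south q n \<subseteq> vspan (north q n \<union> east q n)"
    by (rule south_subset_vspan_north_east[OF assms])
  moreover have "east q n \<subseteq> vspan (A \<union> east q n)" for A
    unfolding vspan_eq_span by (auto intro: vec.span_base)
  ultimately show ?thesis
    unfolding vspan_eq_span vec.span_eq by blast
qed

theorem proposition7p2:
  fixes q :: "'k::field" and n :: nat
  assumes "q \<noteq> 0" and "\<forall>m::nat. m > 0 \<longrightarrow> q ^ m \<noteq> 1" and "n \<ge> 1"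
  defines "N \<equiv> {qsh q (Gt i) (G j) | i j. i + j = n}"
      and "S \<equiv> {qsh q (G i) (Gt j) | i j. i + j = n}"
      and "E \<equiv> {qsh q (Wp i) (Wm j) | i j. i + j = n - 1}"
      and "W \<equiv> {qsh q (Wm i) (Wp j) | i j. i + j = n - 1}"
  shows "vspan (N \<union> E) = vspan (N \<union> W) \<and> vspan (N \<union> W) = vspan (S \<union> E)
         \<and> vspan (S \<union> E) = vspan (S \<union> W)"
proof -
  have n: "0 < n" using \<open>n \<ge> 1\<close> by simp
  have "N = north q n" "S = south q n" "E = east q n" "W = west q n"
    by (simp_all add: N_def S_def E_def W_def north_def south_def east_def west_def)
  then show ?thesis
    using vspan_north_west_eq_north_east[OF assms(1) n] vspan_north_east_eq_south_east[OF assms(1) n]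
      vspan_south_east_eq_south_west[OF assms(1) n]
    by simp
qed

end
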